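(* Let $\{e_n\}_{n\in\mathbb{Z}}$ be a sequence of i.i.d. real random variables, and let $q,d\ge 1$ be integers, $r\in\mathbb{R}$, and $\mu_1,\mu_2,\phi_1,\dots,\phi_q,\psi_1,\dots,\psi_q\in\mathbb{R}$. Define $$a_n=\mu_2+e_n+\sum_{i=1}^q\psi_ie_{n-i},\qquad b_n=\mu_1+e_n+\sum_{i=1}^q\phi_ie_{n-i},$$ $$U_n=\mathbb{1}(a_n\le r),\qquad W_n=\mathbb{1}(b_n\le r)-\mathbb{1}(a_n\le r).$$ Assume $\mathbb{P}(a_n\le r,\ b_n\le r)+\mathbb{P}(a_n>r,\ b_n>r)\neq 0$. Then the series $$\alpha_{n-d}=\sum_{j=1}^{\infty}\Big[\Big(\prod_{s=1}^{j-1}W_{n-sd}\Big)U_{n-jd}\Big]$$ (with the empty product equal to $1$) converges in $L^1$ and almost surely for every $n\in\mathbb{Z}$, and the TMA$(q)$ equation $$y_n=\begin{cases}\mu_1+e_n+\sum_{i=1}^q\phi_ie_{n-i}, & \text{if } y_{n-d}\le r,\\ \mu_2+e_n+\sum_{i=1}^q\psi_ie_{n-i}, & \text{if } y_{n-d}>r,\end{cases}\qquad n\in\mathbb{Z},$$ has a strictly stationary and ergodic solution given by $$y_n=\mu_2+e_n+\sum_{i=1}^q\psi_ie_{n-i}+\Big[(\mu_1-\mu_2)+\sum_{i=1}^q(\phi_i-\psi_i)e_{n-i}\Big]\alpha_{n-d}\quad\text{a.s.}$$ Moreover this solution is unique: any process $\{\tilde y_n\}_{n\in\mathbb{Z}}$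 on the same probability space satisfying the TMA$(q)$ equation almost surely for all $n$ coincides with it almost surely for every $n$.
   Context: $\mathbb{1}(\cdot)$ denotes the indicator function. A solution of the TMA$(q)$ equation means a real-valued process $\{y_n\}_{n\in\mathbb{Z}}$ defined on the same probability space as $\{e_n\}$ such that the displayed equation holds almost surely for every $n\in\mathbb{Z}$. *)

theory Defs
  imports "HOL-Probability.Probability"
begin

text \<open>Moving-average part: mu + e_n + sum_{i=1}^q c_i e_{n-i}.
  a_n = ma_part mu2 psi, b_n = ma_part mu1 phi.\<close>
definition ma_part :: "real \<Rightarrow> (nat \<Rightarrow> real) \<Rightarrow> nat \<Rightarrow> (int \<Rightarrow> 'a \<Rightarrow> real) \<Rightarrow> int \<Rightarrow> 'a \<Rightarrow> real" where
  "ma_part mu c q e n \<omega> = mu + e n \<omega> + (\<Sum>i=1..q. c i * e (n - int i) \<omega>)"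

definition alpha_term ::
  "(int \<Rightarrow> 'a \<Rightarrow> real) \<Rightarrow> (int \<Rightarrow> 'a \<Rightarrow> real) \<Rightarrow> real \<Rightarrow> nat \<Rightarrow> int \<Rightarrow> nat \<Rightarrow> 'a \<Rightarrow> real" where
  "alpha_term a b r d n j \<omega> =
     (\<Prod>s\<in>{1..<j}. (of_bool (b (n - int s * int d) \<omega> \<le> r) - of_bool (a (n - int s * int d) \<omega> \<le> r)))
     * of_bool (a (n - int j * int d) \<omega> \<le> r)"

text \<open>alpha_{n-d} (indexed by n) as the sum over j \<ge> 1.\<close>
definition alpha_series ::
  "(int \<Rightarrow> 'a \<Rightarrow> real) \<Rightarrow> (int \<Rightarrow> 'a \<Rightarrow> real) \<Rightarrow> real \<Rightarrow> nat \<Rightarrow> int \<Rightarrow> 'a \<Rightarrow> real" where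
  "alpha_series a b r d n \<omega> = (\<Sum>j. alpha_term a b r d n (Suc j) \<omega>)"

definition iid_seq :: "'a measure \<Rightarrow> (int \<Rightarrow> 'a \<Rightarrow> real) \<Rightarrow> bool" where
  "iid_seq M e \<longleftrightarrow> (\<forall>n. e n \<in> borel_measurable M) \<and>
     prob_space.indep_vars M (\<lambda>_. borel) e UNIV \<and>
     (\<forall>n. distr M borel (e n) = distr M borel (e 0))"

definition proc_law :: "'a measure \<Rightarrow> (int \<Rightarrow> 'a \<Rightarrow> real) \<Rightarrow> (int \<Rightarrow> real) measure" where
  "proc_law M y = distr M (PiM UNIV (\<lambda>_. borel)) (\<lambda>\<omega> n. y n \<omega>)"

definition strictly_stationary :: "'a measure \<Rightarrow> (int \<Rightarrow> 'a \<Rightarrow> real) \<Rightarrow> bool" where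
  "strictly_stationary M y \<longleftrightarrow>
     (\<forall>k::int. proc_law M (\<lambda>n. y (n + k)) = proc_law M y)"

definition ergodic_process :: "'a measure \<Rightarrow> (int \<Rightarrow> 'a \<Rightarrow> real) \<Rightarrow> bool" where
  "ergodic_process M y \<longleftrightarrow>
     (\<forall>A \<in> sets (PiM (UNIV::int set) (\<lambda>_. (borel::real measure))).
        (\<lambda>x n. x (n + 1)) -` A = A \<longrightarrow>
        measure (proc_law M y) A = 0 \<or> measure (proc_law M y) A = 1)"

definition tma_solution ::
  "'a measure \<Rightarrow> (int \<Rightarrow> 'a \<Rightarrow> real) \<Rightarrow> nat \<Rightarrow> nat \<Rightarrow> real \<Rightarrow> real \<Rightarrow> real \<Rightarrow>
   (nat \<Rightarrow> real) \<Rightarrow> (nat \<Rightarrow> real) \<Rightarrow> (int \<Rightarrow> 'a \<Rightarrow> real) \<Rightarrow> bool" where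
  "tma_solution M e q d r mu1 mu2 phi psi y \<longleftrightarrow>
     (\<forall>n. AE \<omega> in M. y n \<omega> =
        (if y (n - int d) \<omega> \<le> r then ma_part mu1 phi q e n \<omega> else ma_part mu2 psi q e n \<omega>))"

end

theory Submission
  imports Defs
begin

text \<open>
  Write \<open>U\<^sub>m = 1(a\<^sub>m \<le> r)\<close> and \<open>W\<^sub>m = 1(b\<^sub>m \<le> r) - 1(a\<^sub>m \<le> r)\<close>.
  The j-th term of the series \<open>\<alpha>\<close> contains the factor \<open>W\<^sub>n\<^sub>-\<^sub>J\<^sub>d\<close> for every \<open>J < j\<close>,
  and \<open>W\<^sub>m = 0\<close> exactly when \<open>a\<^sub>m\<close> and \<open>b\<^sub>m\<close> lie on the same side of r.

  The proof has a pathwise and a probabilistic half.  Pathwise (Sections 1 and 2): once the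
  two regimes agree at some time \<open>n - Jd\<close>, the series is a finite sum with values in
  {0, 1}, it satisfies \<open>\<alpha>\<^sub>n = U\<^sub>n\<^sub>-\<^sub>d + W\<^sub>n\<^sub>-\<^sub>d \<alpha>\<^sub>n\<^sub>-\<^sub>d\<close>, which is precisely the TMA recursion
  for \<open>y = a + (b - a) \<alpha>\<close>, and the regime indicator of any other solution satisfies
  the same recursion and hence equals \<open>\<alpha>\<close>.  Probabilistically (Sections 3 to 7): the
  agreement events form a stationary q-dependent family of positive probability, so one of
  them occurs along the progression \<open>n - Jd\<close> almost surely; and y is a shift-equivariant
  measurable function of the i.i.d. path, whose law is shift invariant and mixing on
  cylinder events, which gives stationarity and (by approximating invariant events by
  cylinder events) the ergodic 0-1 law.
\<close>

section \<open>Pathwise algebra of the series\<close>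

definition below_ind :: "(int \<Rightarrow> 'x \<Rightarrow> real) \<Rightarrow> real \<Rightarrow> int \<Rightarrow> 'x \<Rightarrow> real" where
  "below_ind a r m \<omega> = of_bool (a m \<omega> \<le> r)"

definition switch_ind :: "(int \<Rightarrow> 'x \<Rightarrow> real) \<Rightarrow> (int \<Rightarrow> 'x \<Rightarrow> real) \<Rightarrow> real \<Rightarrow> int \<Rightarrow> 'x \<Rightarrow> real" where
  "switch_ind a b r m \<omega> = of_bool (b m \<omega> \<le> r) - of_bool (a m \<omega> \<le> r)"

definition alpha_partial ::
  "(int \<Rightarrow> 'x \<Rightarrow> real) \<Rightarrow> (int \<Rightarrow> 'x \<Rightarrow> real) \<Rightarrow> real \<Rightarrow> nat \<Rightarrow> int \<Rightarrow> nat \<Rightarrow> 'x \<Rightarrow> real" where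
  "alpha_partial a b r d n N \<omega> = (\<Sum>j<N. alpha_term a b r d n (Suc j) \<omega>)"

definition switch_prod ::
  "(int \<Rightarrow> 'x \<Rightarrow> real) \<Rightarrow> (int \<Rightarrow> 'x \<Rightarrow> real) \<Rightarrow> real \<Rightarrow> nat \<Rightarrow> int \<Rightarrow> nat \<Rightarrow> 'x \<Rightarrow> real" where
  "switch_prod a b r d n N \<omega> = (\<Prod>s\<in>{1..N}. switch_ind a b r (n - int s * int d) \<omega>)"

definition agree_below ::
  "(int \<Rightarrow> 'x \<Rightarrow> real) \<Rightarrow> (int \<Rightarrow> 'x \<Rightarrow> real) \<Rightarrow> real \<Rightarrow> nat \<Rightarrow> int \<Rightarrow> nat \<Rightarrow> 'x \<Rightarrow> bool" where
  "agree_below a b r d n J \<omega> \<longleftrightarrow> J \<ge> 1 \<and> (a (n - int J * int d) \<omega> \<le> r \<longleftrightarrow> b (n - int J * int d) \<omega> \<le> r)"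

lemma alpha_term_1: "alpha_term a b r d n (Suc 0) \<omega> = below_ind a r (n - int d) \<omega>"
  by (simp add: alpha_term_def below_ind_def)

lemma alpha_term_eq:
  "alpha_term a b r d n j \<omega> =
     (\<Prod>s\<in>{1..<j}. switch_ind a b r (n - int s * int d) \<omega>) * below_ind a r (n - int j * int d) \<omega>"
  by (simp add: alpha_term_def switch_ind_def below_ind_def)

lemma alpha_term_Suc_Suc:
  "alpha_term a b r d n (Suc (Suc j)) \<omega> =
     switch_ind a b r (n - int d) \<omega> * alpha_term a b r d (n - int d) (Suc j) \<omega>"
proof -
  have "(\<Prod>s\<in>{1..<Suc (Suc j)}. switch_ind a b r (n - int s * int d) \<omega>)
      = switch_ind a b r (n - int d) \<omega> * (\<Prod>s\<in>{Suc 1..<Suc (Suc j)}. switch_ind a b r (n - int s * int d) \<omega>)"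
    by (subst prod.atLeast_Suc_lessThan) auto
  also have "(\<Prod>s\<in>{Suc 1..<Suc (Suc j)}. switch_ind a b r (n - int s * int d) \<omega>)
      = (\<Prod>s\<in>{1..<Suc j}. switch_ind a b r (n - int d - int s * int d) \<omega>)"
    by (subst prod.shift_bounds_Suc_ivl) (simp add: algebra_simps)
  finally show ?thesis
    unfolding alpha_term_eq by (simp add: algebra_simps)
qed

lemma alpha_partial_Suc:
  "alpha_partial a b r d n (Suc N) \<omega> =
     below_ind a r (n - int d) \<omega> + switch_ind a b r (n - int d) \<omega> * alpha_partial a b r d (n - int d) N \<omega>"
  unfolding alpha_partial_def
  by (subst sum.lessThan_Suc_shift) (simp add: alpha_term_1 alpha_term_Suc_Suc sum_distrib_left)

lemma alpha_partial_0_1: "alpha_partial a b r d n N \<omega> \<in> {0, 1}"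
proof (induction N arbitrary: n)
  case 0
  then show ?case by (simp add: alpha_partial_def)
next
  case (Suc N)
  from Suc[of "n - int d"] show ?case
    by (auto simp: alpha_partial_Suc below_ind_def switch_ind_def)
qed

lemma switch_prod_Suc:
  "switch_prod a b r d n (Suc N) \<omega> = switch_ind a b r (n - int d) \<omega> * switch_prod a b r d (n - int d) N \<omega>"
proof -
  have "switch_prod a b r d n (Suc N) \<omega> =
      switch_ind a b r (n - int d) \<omega> * (\<Prod>s\<in>{Suc 1..Suc N}. switch_ind a b r (n - int s * int d) \<omega>)"
    unfolding switch_prod_def by (subst prod.atLeast_Suc_atMost) auto
  also have "(\<Prod>s\<in>{Suc 1..Suc N}. switch_ind a b r (n - int s * int d) \<omega>)
      = (\<Prod>s\<in>{1..N}. switch_ind a b r (n - int (Suc s) * int d) \<omega>)"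
    by (subst prod.shift_bounds_cl_Suc_ivl) simp
  finally show ?thesis by (simp add: switch_prod_def algebra_simps)
qed

lemma alpha_term_vanish:
  assumes "agree_below a b r d n J \<omega>" "j \<ge> J"
  shows "alpha_term a b r d n (Suc j) \<omega> = 0"
  using assms unfolding alpha_term_def agree_below_def
  by (subst prod_zero) (auto intro!: bexI[of _ J])

lemma alpha_series_finite:
  assumes "agree_below a b r d n J \<omega>"
  shows "(\<lambda>j. alpha_term a b r d n (Suc j) \<omega>) sums alpha_partial a b r d n J \<omega>"
  unfolding alpha_partial_def
  by (rule sums_finite) (use alpha_term_vanish[OF assms] in auto)

lemma alpha_series_eq_partial:
  assumes "agree_below a b r d n J \<omega>"
  shows "alpha_series a b r d n \<omega> = alpha_partial a b r d n J \<omega>"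
  using alpha_series_finite[OF assms] by (simp add: alpha_series_def sums_iff)

lemma alpha_series_0_1:
  assumes "agree_below a b r d n J \<omega>"
  shows "alpha_series a b r d n \<omega> \<in> {0, 1}"
  using alpha_partial_0_1 by (simp add: alpha_series_eq_partial[OF assms])

lemma alpha_partial_stable:
  assumes "agree_below a b r d n J \<omega>" "N \<ge> J"
  shows "alpha_partial a b r d n N \<omega> = alpha_series a b r d n \<omega>"
proof -
  have split: "{..<N} = {..<J} \<union> {J..<N}" using assms(2) by auto
  have "(\<Sum>j\<in>{J..<N}. alpha_term a b r d n (Suc j) \<omega>) = 0"
    using alpha_term_vanish[OF assms(1)] by (intro sum.neutral) auto
  then have "alpha_partial a b r d n N \<omega> = alpha_partial a b r d n J \<omega>"
    unfolding alpha_partial_def split by (subst sum.union_disjoint) auto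
  then show ?thesis by (simp add: alpha_series_eq_partial[OF assms(1)])
qed

lemma alpha_series_rec:
  assumes "agree_below a b r d (n - int d) J \<omega>"
  shows "alpha_series a b r d n \<omega> =
           below_ind a r (n - int d) \<omega> + switch_ind a b r (n - int d) \<omega> * alpha_series a b r d (n - int d) \<omega>"
proof -
  have "agree_below a b r d n (Suc J) \<omega>"
    using assms by (simp add: agree_below_def algebra_simps)
  then show ?thesis
    using assms by (simp add: alpha_series_eq_partial alpha_partial_Suc)
qed

lemma tma_pathwise:
  fixes a b :: "int \<Rightarrow> 'x \<Rightarrow> real" and r :: real and d :: nat
  defines "y \<equiv> \<lambda>n \<omega>. a n \<omega> + (b n \<omega> - a n \<omega>) * alpha_series a b r d n \<omega>"
  assumes "agree_below a b r d (n - int d) J \<omega>"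
  shows "y n \<omega> = (if y (n - int d) \<omega> \<le> r then b n \<omega> else a n \<omega>)"
proof -
  from alpha_series_0_1[OF assms(2)] show ?thesis
    using alpha_series_rec[OF assms(2)] by (auto simp: y_def below_ind_def switch_ind_def)
qed

text \<open>Pathwise uniqueness: the regime indicator \<open>I\<^sub>m = 1(y\<^sub>m\<^sub>-\<^sub>d \<le> r)\<close> of any solution
  unrolls to \<open>I\<^sub>n = S\<^sub>N(n) + (\<Prod>W) I\<^sub>n\<^sub>-\<^sub>N\<^sub>d\<close>, and the product vanishes at the agreement time.\<close>

lemma tma_unique_pathwise:
  fixes a b :: "int \<Rightarrow> 'x \<Rightarrow> real"
  assumes tma: "\<And>m. y m \<omega> = (if y (m - int d) \<omega> \<le> r then b m \<omega> else a m \<omega>)"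
    and agree: "agree_below a b r d n J \<omega>"
  shows "y n \<omega> = a n \<omega> + (b n \<omega> - a n \<omega>) * alpha_series a b r d n \<omega>"
proof -
  define I where "I m = (of_bool (y (m - int d) \<omega> \<le> r) :: real)" for m
  have I_step: "I m = below_ind a r (m - int d) \<omega> + switch_ind a b r (m - int d) \<omega> * I (m - int d)" for m
    using tma[of "m - int d"] by (auto simp: I_def below_ind_def switch_ind_def)
  have I_unroll: "I m = alpha_partial a b r d m N \<omega> + switch_prod a b r d m N \<omega> * I (m - int N * int d)" for N m
  proof (induction N arbitrary: m)
    case 0
    then show ?case by (simp add: alpha_partial_def switch_prod_def)
  next
    case (Suc N)
    show ?case
      by (subst I_step, subst Suc) (simp add: alpha_partial_Suc switch_prod_Suc algebra_simps)
  qed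
  have "switch_prod a b r d n J \<omega> = 0"
    using agree unfolding switch_prod_def agree_below_def by (intro prod_zero) (auto simp: switch_ind_def)
  then have "I n = alpha_series a b r d n \<omega>"
    using I_unroll[of n J] alpha_series_eq_partial[OF agree] by simp
  then show ?thesis using tma[of n] by (auto simp: I_def)
qed

section \<open>Consequences of almost sure agreement\<close>

lemma alpha_term_measurable:
  assumes "\<And>m. a m \<in> borel_measurable N" "\<And>m. b m \<in> borel_measurable N"
  shows "alpha_term a b r d n j \<in> borel_measurable N"
  using assms unfolding alpha_term_def by measurable

lemma alpha_series_measurable:
  assumes "\<And>m. a m \<in> borel_measurable N" "\<And>m. b m \<in> borel_measurable N"
  shows "alpha_series a b r d n \<in> borel_measurable N"
  unfolding alpha_series_def[abs_def]
  by (intro borel_measurable_suminf alpha_term_measurable[OF assms])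

text \<open>If agreement happens a.s., the series converges a.s. and in \<open>L\<^sup>1\<close>: the errors of
  the partial sums are bounded by 2 and eventually zero (dominated convergence).\<close>

lemma (in finite_measure) alpha_series_convergence:
  assumes meas: "\<And>m. a m \<in> borel_measurable M" "\<And>m. b m \<in> borel_measurable M"
    and agree: "AE \<omega> in M. \<exists>J. agree_below a b r d n J \<omega>"
  shows "(AE \<omega> in M. summable (\<lambda>j. alpha_term a b r d n (Suc j) \<omega>))
     \<and> integrable M (alpha_series a b r d n)
     \<and> ((\<lambda>N. LINT \<omega>|M. \<bar>(\<Sum>j<N. alpha_term a b r d n (Suc j) \<omega>) - alpha_series a b r d n \<omega>\<bar>) \<longlonglongrightarrow> 0)"
proof (intro conjI)
  note [measurable] = alpha_term_measurable[OF meas] alpha_series_measurable[OF meas]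
  define err where "err N \<omega> = \<bar>alpha_partial a b r d n N \<omega> - alpha_series a b r d n \<omega>\<bar>" for N \<omega>
  show "AE \<omega> in M. summable (\<lambda>j. alpha_term a b r d n (Suc j) \<omega>)"
    using agree by eventually_elim (auto intro: sums_summable alpha_series_finite)
  have bounded: "AE \<omega> in M. \<bar>alpha_series a b r d n \<omega>\<bar> \<le> 1"
    using agree by eventually_elim (auto dest: alpha_series_0_1)
  then show "integrable M (alpha_series a b r d n)"
    by (intro integrable_const_bound[where B=1]) auto
  have err_meas: "err N \<in> borel_measurable M" for N
    unfolding err_def[abs_def] alpha_partial_def by measurable
  have err_lim: "AE \<omega> in M. (\<lambda>N. err N \<omega>) \<longlonglongrightarrow> 0"
    using agree
  proof eventually_elim
    case (elim \<omega>)
    then obtain J where "agree_below a b r d n J \<omega>" by blast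
    then have "\<forall>N\<ge>J. err N \<omega> = 0" by (simp add: err_def alpha_partial_stable)
    then show ?case by (intro tendsto_eventually) (auto simp: eventually_sequentially)
  qed
  have err_bound: "AE \<omega> in M. norm (err N \<omega>) \<le> 2" for N
    using bounded
  proof eventually_elim
    case (elim \<omega>)
    then show ?case using alpha_partial_0_1[of a b r d n N \<omega>] by (auto simp: err_def)
  qed
  have "(\<lambda>N. integral\<^sup>L M (err N)) \<longlonglongrightarrow> integral\<^sup>L M (\<lambda>_. 0)"
    by (rule integral_dominated_convergence[where w="\<lambda>_. 2", OF _ err_meas _ err_lim err_bound]) auto
  then show "(\<lambda>N. LINT \<omega>|M. \<bar>(\<Sum>j<N. alpha_term a b r d n (Suc j) \<omega>) - alpha_series a b r d n \<omega>\<bar>) \<longlonglongrightarrow> 0"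
    by (simp add: err_def[abs_def] alpha_partial_def)
qed

text \<open>The coefficient of \<open>\<alpha>\<close> in the stated solution is \<open>b\<^sub>n - a\<^sub>n\<close>.\<close>

lemma ma_part_diff:
  "ma_part mu1 phi q e n \<omega> - ma_part mu2 psi q e n \<omega> =
     (mu1 - mu2) + (\<Sum>i=1..q. (phi i - psi i) * e (n - int i) \<omega>)"
  by (simp add: ma_part_def sum_subtractf left_diff_distrib)

lemma tma_solution_of_agree:
  fixes e :: "int \<Rightarrow> 'a \<Rightarrow> real" and q d :: nat and r mu1 mu2 :: real
    and phi psi :: "nat \<Rightarrow> real"
  defines "a \<equiv> ma_part mu2 psi q e" and "b \<equiv> ma_part mu1 phi q e"
  assumes agree: "\<And>n. AE \<omega> in M. \<exists>J. agree_below a b r d n J \<omega>"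
  shows "tma_solution M e q d r mu1 mu2 phi psi
           (\<lambda>n \<omega>. a n \<omega> + (b n \<omega> - a n \<omega>) * alpha_series a b r d n \<omega>)"
  unfolding tma_solution_def
proof
  fix n
  show "AE \<omega> in M. a n \<omega> + (b n \<omega> - a n \<omega>) * alpha_series a b r d n \<omega> =
      (if a (n - int d) \<omega> + (b (n - int d) \<omega> - a (n - int d) \<omega>) * alpha_series a b r d (n - int d) \<omega> \<le> r
       then ma_part mu1 phi q e n \<omega> else ma_part mu2 psi q e n \<omega>)"
    using agree[of "n - int d"]
  proof eventually_elim
    case (elim \<omega>)
    then obtain J where "agree_below a b r d (n - int d) J \<omega>" by blast
    from tma_pathwise[OF this] show ?case by (simp add: a_def b_def)
  qed
qed

lemma tma_solution_unique:
  fixes e :: "int \<Rightarrow> 'a \<Rightarrow> real" and q d :: nat and r mu1 mu2 :: real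
    and phi psi :: "nat \<Rightarrow> real"
  defines "a \<equiv> ma_part mu2 psi q e" and "b \<equiv> ma_part mu1 phi q e"
  assumes agree: "AE \<omega> in M. \<exists>J. agree_below a b r d n J \<omega>"
    and tma: "tma_solution M e q d r mu1 mu2 phi psi y"
  shows "AE \<omega> in M. y n \<omega> = a n \<omega> + (b n \<omega> - a n \<omega>) * alpha_series a b r d n \<omega>"
proof -
  have "AE \<omega> in M. \<forall>m. y m \<omega> = (if y (m - int d) \<omega> \<le> r then b m \<omega> else a m \<omega>)"
    using tma unfolding tma_solution_def AE_all_countable a_def b_def by simp
  then show ?thesis
    using agree
  proof eventually_elim
    case (elim \<omega>)
    then obtain J where "agree_below a b r d n J \<omega>" by blast
    with elim(1) show ?case by (intro tma_unique_pathwise[of y]) blast+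
  qed
qed

section \<open>Approximating events by an algebra of sets\<close>

definition approx_by :: "'x measure \<Rightarrow> 'x set set \<Rightarrow> 'x set \<Rightarrow> bool" where
  "approx_by M A0 A \<longleftrightarrow> (\<forall>e>0. \<exists>C\<in>A0. measure M (sym_diff A C) < e)"

lemma (in finite_measure) abs_measure_diff_le_sym_diff:
  assumes "X \<in> sets M" "Y \<in> sets M"
  shows "\<bar>measure M X - measure M Y\<bar> \<le> measure M (sym_diff X Y)"
proof -
  have "measure M X \<le> measure M (Y \<union> sym_diff X Y)"
    using assms by (intro finite_measure_mono) auto
  also have "\<dots> \<le> measure M Y + measure M (sym_diff X Y)"
    using assms by (intro measure_subadditive) auto
  finally have "measure M X \<le> measure M Y + measure M (sym_diff X Y)" .
  moreover have "measure M Y \<le> measure M (X \<union> sym_diff X Y)"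
    using assms by (intro finite_measure_mono) auto
  then have "measure M Y \<le> measure M X + measure M (sym_diff X Y)"
    using assms measure_subadditive[of X M "sym_diff X Y"] by auto
  ultimately show ?thesis by linarith
qed

text \<open>If B is close to two events C and D with \<open>P(C \<inter> D) = P(C)\<^sup>2\<close>, then \<open>P(B)\<close> is close
  to \<open>P(B)\<^sup>2\<close>: compare both with \<open>P(B \<inter> B)\<close> and \<open>P(C)\<^sup>2\<close>.\<close>

lemma (in prob_space) prob_close_to_square:
  assumes sets: "B \<in> events" "C \<in> events" "D \<in> events"
    and close: "prob (sym_diff B C) < e" "prob (sym_diff B D) < e"
    and square: "prob (C \<inter> D) = prob C ^ 2"
  shows "\<bar>prob B - prob B ^ 2\<bar> < 4 * e"
proof -
  have "\<bar>prob (B \<inter> B) - prob (C \<inter> D)\<bar> \<le> prob (sym_diff (B \<inter> B) (C \<inter> D))"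
    using sets by (intro abs_measure_diff_le_sym_diff) auto
  also have "\<dots> \<le> prob (sym_diff B C \<union> sym_diff B D)"
    using sets by (intro finite_measure_mono) auto
  also have "\<dots> \<le> prob (sym_diff B C) + prob (sym_diff B D)"
    using sets by (intro measure_subadditive) auto
  finally have "\<bar>prob B - prob C ^ 2\<bar> < 2 * e" using close square by simp
  moreover have "\<bar>prob C ^ 2 - prob B ^ 2\<bar> \<le> 2 * e"
  proof -
    have "prob C ^ 2 - prob B ^ 2 = (prob C - prob B) * (prob C + prob B)"
      by (simp add: power2_eq_square algebra_simps)
    then have "\<bar>prob C ^ 2 - prob B ^ 2\<bar> = \<bar>prob C - prob B\<bar> * (prob C + prob B)"
      by (simp add: abs_mult)
    also have "\<dots> \<le> \<bar>prob C - prob B\<bar> * 2"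
    proof (rule mult_left_mono)
      show "prob C + prob B \<le> 2" using prob_le_1[of C] prob_le_1[of B] by linarith
    qed simp
    also have "\<bar>prob C - prob B\<bar> \<le> e"
      using abs_measure_diff_le_sym_diff[of B C] sets close(1) by (simp add: abs_minus_commute)
    finally show ?thesis by simp
  qed
  ultimately show ?thesis by linarith
qed

text \<open>Approximability from an algebra is preserved by countable unions: approximate a long
  finite union, each piece to within \<open>e / (2 (N + 1))\<close>.\<close>

lemma (in finite_measure) approx_by_Union:
  assumes A0: "A0 \<subseteq> sets M" "{} \<in> A0" "\<And>C D. C \<in> A0 \<Longrightarrow> D \<in> A0 \<Longrightarrow> C \<union> D \<in> A0"
    and a: "\<And>i. a i \<in> sets M" "\<And>i::nat. approx_by M A0 (a i)"
  shows "approx_by M A0 (\<Union>i. a i)"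
  unfolding approx_by_def
proof (intro allI impI)
  fix e :: real assume e: "e > 0"
  define F where "F n = (\<Union>i<n. a i)" for n
  have F_sets: "F n \<in> sets M" for n unfolding F_def using a by auto
  have "incseq F" unfolding F_def incseq_def by force
  then have "(\<lambda>n. measure M (F n)) \<longlonglongrightarrow> measure M (\<Union>n. F n)"
    using F_sets by (intro finite_Lim_measure_incseq) auto
  moreover have "(\<Union>n. F n) = (\<Union>i. a i)" unfolding F_def by auto
  ultimately obtain N where N: "\<bar>measure M (F N) - measure M (\<Union>i. a i)\<bar> < e/2"
    using e by (auto dest!: LIMSEQ_D[of _ _ "e/2"] simp: dist_real_def)
  define e' where "e' = e / (2 * (real N + 1))"
  have "e' > 0" using e by (simp add: e'_def)
  then have "\<forall>i. \<exists>C. C \<in> A0 \<and> measure M (sym_diff (a i) C) < e'"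
    using a(2) unfolding approx_by_def by blast
  then obtain c where c: "\<And>i. c i \<in> A0" "\<And>i. measure M (sym_diff (a i) (c i)) < e'"
    by metis
  have c_sets: "c i \<in> sets M" for i using c A0 by auto
  have C_in: "(\<Union>i<n. c i) \<in> A0" for n by (induction n) (auto simp: lessThan_Suc A0 c)
  have U: "(\<Union>i. a i) \<in> sets M" using a by auto
  have "sym_diff (\<Union>i. a i) (\<Union>i<N. c i) \<subseteq> ((\<Union>i. a i) - F N) \<union> (\<Union>i<N. sym_diff (a i) (c i))"
    unfolding F_def by blast
  then have "measure M (sym_diff (\<Union>i. a i) (\<Union>i<N. c i))
      \<le> measure M (((\<Union>i. a i) - F N) \<union> (\<Union>i<N. sym_diff (a i) (c i)))"
    using U F_sets a c_sets by (intro finite_measure_mono) auto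
  also have "\<dots> \<le> measure M ((\<Union>i. a i) - F N) + measure M (\<Union>i<N. sym_diff (a i) (c i))"
    using U F_sets a c_sets by (intro measure_subadditive) auto
  also have "measure M (\<Union>i<N. sym_diff (a i) (c i)) \<le> (\<Sum>i<N. measure M (sym_diff (a i) (c i)))"
    using a c_sets by (intro finite_measure_subadditive_finite) auto
  also have "\<dots> \<le> real N * e'" using sum_mono[of "{..<N}", OF less_imp_le[OF c(2)]] by simp
  also have "measure M ((\<Union>i. a i) - F N) = measure M (\<Union>i. a i) - measure M (F N)"
    using U F_sets by (intro finite_measure_Diff) (auto simp: F_def)
  also have "real N * e' < e / 2"
    using e by (simp add: e'_def field_simps)
  finally have "measure M (sym_diff (\<Union>i. a i) (\<Union>i<N. c i)) < e" using N by linarith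
  with C_in show "\<exists>C\<in>A0. measure M (sym_diff (\<Union>i. a i) C) < e" by blast
qed

lemma (in finite_measure) approx_by_generating_algebra:
  assumes gen: "sets M = sigma_sets (space M) G" and G: "G \<subseteq> A0"
    and A0: "A0 \<subseteq> sets M" "{} \<in> A0" "\<And>C. C \<in> A0 \<Longrightarrow> space M - C \<in> A0"
      "\<And>C D. C \<in> A0 \<Longrightarrow> D \<in> A0 \<Longrightarrow> C \<union> D \<in> A0"
    and A: "A \<in> sets M"
  shows "approx_by M A0 A"
proof -
  from A gen have "A \<in> sigma_sets (space M) G" by simp
  then show ?thesis
  proof induct
    case (Basic a)
    then show ?case using G by (auto intro!: bexI[of _ a] simp: approx_by_def)
  next
    case Empty
    then show ?case using A0 by (auto intro!: bexI[of _ "{}"] simp: approx_by_def)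
  next
    case (Compl a)
    have "a \<subseteq> space M" using Compl(1) gen sets.sets_into_space by auto
    moreover have "C \<subseteq> space M" if "C \<in> A0" for C
      using that A0(1) sets.sets_into_space by auto
    ultimately have "sym_diff (space M - a) (space M - C) = sym_diff a C" if "C \<in> A0" for C
      using that by blast
    then show ?case using Compl(2) A0(3) unfolding approx_by_def by metis
  next
    case (Union a)
    then show ?case using gen by (intro approx_by_Union[OF A0(1,2,4)]) auto
  qed
qed

section \<open>Path space, shifts and cylinder events\<close>

abbreviation path_space :: "(int \<Rightarrow> real) measure" where
  "path_space \<equiv> PiM (UNIV::int set) (\<lambda>_. (borel::real measure))"

definition path_shift :: "int \<Rightarrow> (int \<Rightarrow> real) \<Rightarrow> (int \<Rightarrow> real)" where
  "path_shift k x = (\<lambda>n. x (n + k))"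

definition depends_on :: "int set \<Rightarrow> (int \<Rightarrow> real) set \<Rightarrow> bool" where
  "depends_on J C \<longleftrightarrow> (\<forall>x x'. (\<forall>j\<in>J. x j = x' j) \<longrightarrow> (x \<in> C \<longleftrightarrow> x' \<in> C))"

definition cylinder_events :: "(int \<Rightarrow> real) set set" where
  "cylinder_events = {C \<in> sets path_space. \<exists>J. finite J \<and> depends_on J C}"

lemma space_path_space: "space path_space = UNIV"
  by (auto simp: space_PiM)

lemma path_shift_measurable[measurable]: "path_shift k \<in> measurable path_space path_space"
  unfolding path_shift_def by (rule measurable_PiM_single') (auto simp: space_PiM)

lemma path_shift_sets: "S \<in> sets path_space \<Longrightarrow> path_shift k -` S \<in> sets path_space"
  using measurable_sets[OF path_shift_measurable, of S k] by (simp add: space_path_space)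

lemma path_shift_invariant_iterate:
  assumes "path_shift 1 -` B = B"
  shows "path_shift (int k) -` B = B"
proof (induction k)
  case 0
  then show ?case by (simp add: path_shift_def)
next
  case (Suc k)
  have "path_shift (int (Suc k)) -` B = path_shift 1 -` (path_shift (int k) -` B)"
    by (auto simp: path_shift_def algebra_simps)
  then show ?case using Suc assms by simp
qed

lemma depends_on_shift: "depends_on J C \<Longrightarrow> depends_on ((\<lambda>j. j + k) ` J) (path_shift k -` C)"
  unfolding depends_on_def path_shift_def by auto

lemma depends_on_avoid_events:
  assumes local: "\<And>m x x'. (\<forall>j\<in>{m - int q..m}. x j = x' j) \<Longrightarrow> P m x = P m x'"
    and window: "\<And>i. i \<in> I \<Longrightarrow> {f i - int q..f i} \<subseteq> W"
  shows "depends_on W {x. \<forall>i\<in>I. \<not> P (f i) x}"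
  unfolding depends_on_def
proof (intro allI impI)
  fix x x' :: "int \<Rightarrow> real" assume "\<forall>j\<in>W. x j = x' j"
  then have "P (f i) x = P (f i) x'" if "i \<in> I" for i
    using window[OF that] by (intro local) auto
  then show "x \<in> {x. \<forall>i\<in>I. \<not> P (f i) x} \<longleftrightarrow> x' \<in> {x. \<forall>i\<in>I. \<not> P (f i) x}" by auto
qed

lemma cylinder_events_compl: "C \<in> cylinder_events \<Longrightarrow> UNIV - C \<in> cylinder_events"
proof -
  assume "C \<in> cylinder_events"
  then obtain J where J: "finite J" "depends_on J C" "C \<in> sets path_space"
    unfolding cylinder_events_def by auto
  then have "depends_on J (UNIV - C)" unfolding depends_on_def by blast
  moreover have "UNIV - C \<in> sets path_space"
    using sets.compl_sets[OF J(3)] by (simp add: space_path_space)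
  ultimately show ?thesis using J(1) unfolding cylinder_events_def by blast
qed

lemma cylinder_events_Un:
  assumes CD: "C \<in> cylinder_events" "D \<in> cylinder_events"
  shows "C \<union> D \<in> cylinder_events"
proof -
  obtain J K where "finite J" "depends_on J C" "finite K" "depends_on K D"
    using CD unfolding cylinder_events_def by auto
  then have "finite (J \<union> K)" "depends_on (J \<union> K) (C \<union> D)"
    unfolding depends_on_def by blast+
  then show ?thesis using CD unfolding cylinder_events_def by blast
qed

lemma prod_algebra_cylinder_events:
  assumes X: "X \<in> prod_algebra UNIV (\<lambda>_::int. (borel::real measure))"
  shows "X \<in> cylinder_events"
proof -
  have "X \<in> sets path_space" unfolding sets_PiM using X by (rule sigma_sets.Basic)
  from X show ?thesis
  proof (rule prod_algebraE)
    fix J E assume "X = prod_emb UNIV (\<lambda>_. borel) J (Pi\<^sub>E J E)" "finite J"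
    then show ?thesis using \<open>X \<in> sets path_space\<close> unfolding cylinder_events_def depends_on_def
      by (auto simp: prod_emb_def PiE_iff intro!: exI[of _ J])
  qed
qed

lemma approx_by_cylinders:
  assumes "finite_measure L" "sets L = sets path_space" "B \<in> sets path_space"
  shows "approx_by L cylinder_events B"
proof -
  interpret finite_measure L by fact
  have space_L: "space L = UNIV"
    using sets_eq_imp_space_eq[OF assms(2)] space_path_space by simp
  have gen: "sets L = sigma_sets (space L) (prod_algebra UNIV (\<lambda>_::int. (borel::real measure)))"
    unfolding assms(2) space_L sets_PiM by (simp add: space_PiM)
  have "{} \<in> cylinder_events" "cylinder_events \<subseteq> sets L"
    unfolding cylinder_events_def depends_on_def assms(2) by auto
  then show ?thesis
    using assms(2,3) prod_algebra_cylinder_events cylinder_events_compl cylinder_events_Un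
    by (intro approx_by_generating_algebra[OF gen]) (auto simp: space_L)
qed

section \<open>Shift-invariant laws with independent coordinate blocks\<close>

locale shift_independent = prob_space L for L :: "(int \<Rightarrow> real) measure" +
  assumes sets_L: "sets L = sets path_space"
    and shift_invariant: "\<And>k. distr L path_space (path_shift k) = L"
    and independent: "\<And>C D J K. C \<in> sets path_space \<Longrightarrow> D \<in> sets path_space \<Longrightarrow> J \<inter> K = {}
      \<Longrightarrow> depends_on J C \<Longrightarrow> depends_on K D \<Longrightarrow> prob (C \<inter> D) = prob C * prob D"
begin

lemma space_L: "space L = UNIV"
  using sets_eq_imp_space_eq[OF sets_L] space_path_space by simp

lemma prob_shift:
  assumes "S \<in> sets path_space"
  shows "prob (path_shift k -` S) = prob S"
proof -
  have "prob S = measure (distr L path_space (path_shift k)) S" using shift_invariant by simp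
  also have "\<dots> = prob (path_shift k -` S)"
    using assms by (subst measure_distr) (auto simp: measurable_cong_sets[OF sets_L] space_L)
  finally show ?thesis by simp
qed

lemma cylinder_mixing:
  assumes "C \<in> cylinder_events"
  obtains k :: nat where "prob (C \<inter> path_shift (int k) -` C) = prob C ^ 2"
proof -
  obtain J where C: "C \<in> sets path_space" "finite J" "depends_on J C"
    using assms unfolding cylinder_events_def by blast
  define R where "R = (\<Sum>j\<in>J. nat \<bar>j\<bar>)"
  have bound: "\<bar>j\<bar> \<le> int R" if "j \<in> J" for j
  proof -
    have "nat \<bar>j\<bar> \<le> R" unfolding R_def using C(2) that by (intro member_le_sum) auto
    then show ?thesis by linarith
  qed
  have disj: "J \<inter> (\<lambda>j. j + int (2 * R + 1)) ` J = {}"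
  proof (rule ccontr)
    assume "J \<inter> (\<lambda>j. j + int (2 * R + 1)) ` J \<noteq> {}"
    then obtain i j where "i \<in> J" "j \<in> J" "i = j + int (2 * R + 1)" by auto
    with bound[of i] bound[of j] show False by linarith
  qed
  have "prob (C \<inter> path_shift (int (2 * R + 1)) -` C) = prob C * prob (path_shift (int (2 * R + 1)) -` C)"
    using independent[OF C(1) path_shift_sets[OF C(1)] disj C(3) depends_on_shift[OF C(3)]] .
  then show ?thesis
    using that[of "2 * R + 1"] prob_shift[OF C(1)] by (simp add: power2_eq_square)
qed

text \<open>Ergodicity: for invariant B and a cylinder C close to B, B is equally close to a far
  shift of C, which is independent of C, so \<open>P(B) \<approx> P(C)\<^sup>2 \<approx> P(B)\<^sup>2\<close>.\<close>

lemma invariant_event_prob_0_1: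
  assumes B: "B \<in> sets path_space" and inv: "path_shift 1 -` B = B"
  shows "prob B = 0 \<or> prob B = 1"
proof -
  have close: "\<bar>prob B - prob B ^ 2\<bar> < 4 * e" if e: "e > 0" for e
  proof -
    obtain C where C: "C \<in> cylinder_events" "prob (sym_diff B C) < e"
      using approx_by_cylinders[OF finite_measure_axioms sets_L B] e unfolding approx_by_def by blast
    obtain k :: nat where k: "prob (C \<inter> path_shift (int k) -` C) = prob C ^ 2"
      using cylinder_mixing[OF C(1)] .
    have sets: "B \<in> events" "C \<in> events" "path_shift (int k) -` C \<in> events"
      using B C(1) path_shift_sets sets_L unfolding cylinder_events_def by auto
    have "sym_diff B (path_shift (int k) -` C) = path_shift (int k) -` sym_diff B C"
      using path_shift_invariant_iterate[OF inv, of k] by auto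
    then have "prob (sym_diff B (path_shift (int k) -` C)) < e"
      using C sets prob_shift[of "sym_diff B C" "int k"] sets_L by auto
    then show ?thesis using prob_close_to_square[OF sets C(2) _ k] by blast
  qed
  have "prob B = prob B ^ 2"
  proof (rule ccontr)
    assume "prob B \<noteq> prob B ^ 2"
    then show False using close[of "\<bar>prob B - prob B ^ 2\<bar> / 4"] by simp
  qed
  then show ?thesis by (simp add: power2_eq_square)
qed

lemma path_event_sets:
  assumes "{x. P 0 x} \<in> sets path_space" and "\<And>m x. P m x = P 0 (path_shift m x)"
  shows "{x. P m x} \<in> sets path_space" "{x. \<not> P m x} \<in> sets path_space"
proof -
  have "{x. P m x} = path_shift m -` {x. P 0 x}" using assms(2) by auto
  then show P_sets: "{x. P m x} \<in> sets path_space" using path_shift_sets[OF assms(1)] by simp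
  have "{x. \<not> P m x} = space path_space - {x. P m x}" by (auto simp: space_path_space)
  then show "{x. \<not> P m x} \<in> sets path_space" using P_sets by auto
qed

lemma avoid_events_sets:
  assumes "{x. P 0 x} \<in> sets path_space" and "\<And>m x. P m x = P 0 (path_shift m x)"
    and "countable I"
  shows "{x. \<forall>i\<in>I. \<not> P (f i) x} \<in> sets path_space"
proof -
  have "{x. \<forall>i\<in>I. \<not> P (f i) x} = (\<Inter>i\<in>I. {x. \<not> P (f i) x})" by auto
  moreover have "UNIV \<in> sets path_space"
    using sets.top[of path_space] by (simp add: space_path_space)
  ultimately show ?thesis
    using path_event_sets(2)[where P=P, OF assms(1,2)] assms(3) by (simp add: sets.countable_INT'')
qed

text \<open>If moreover \<open>P m\<close> depends only on the coordinates \<open>m - q, ..., m\<close>, events spaced by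
  \<open>(q + 1) d\<close> are independent, so avoiding K of them has probability \<open>(1 - P(P 0))\<^sup>K\<close>.\<close>

lemma avoid_spaced_events_prob:
  fixes P :: "int \<Rightarrow> (int \<Rightarrow> real) \<Rightarrow> bool" and q d :: nat and n :: int
  assumes meas: "{x. P 0 x} \<in> sets path_space"
    and local: "\<And>m x x'. (\<forall>j\<in>{m - int q..m}. x j = x' j) \<Longrightarrow> P m x = P m x'"
    and shift: "\<And>m x. P m x = P 0 (path_shift m x)"
    and d: "d \<ge> 1"
  defines "c \<equiv> \<lambda>m::nat. n - int ((q + 1) * m) * int d"
  shows "prob {x. \<forall>m\<in>{1..K}. \<not> P (c m) x} = (1 - prob {x. P 0 x}) ^ K"
proof (induction K)
  case 0
  then show ?case using prob_space space_L by simp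
next
  case (Suc K)
  define G where "G = {x. \<forall>m\<in>{1..K}. \<not> P (c m) x}"
  define F where "F = {x. \<forall>m\<in>{Suc K}. \<not> P (c m) x}"
  have G_sets: "G \<in> sets path_space" and F_sets: "F \<in> sets path_space"
    unfolding G_def F_def by (intro avoid_events_sets[where P=P, OF meas shift]; simp)+
  have window: "{c m - int q..c m} \<subseteq> {c K - int q..n}" if "m \<in> {1..K}" for m
  proof -
    have "(q + 1) * m \<le> (q + 1) * K" using that by (intro mult_le_mono2) simp
    then have "int ((q + 1) * m) \<le> int ((q + 1) * K)" by (simp only: of_nat_le_iff)
    from mult_right_mono[OF this, of "int d"] have "c K \<le> c m" "c m \<le> n"
      unfolding c_def by simp_all
    then show ?thesis by auto
  qed
  have G_dep: "depends_on {c K - int q..n} G"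
    unfolding G_def using local window by (rule depends_on_avoid_events)
  have F_dep: "depends_on {c (Suc K) - int q..c (Suc K)} F"
    unfolding F_def using local by (rule depends_on_avoid_events) auto
  have "(q + 1) * 1 \<le> (q + 1) * d" using d by (intro mult_le_mono2)
  then have "int q < int ((q + 1) * d)" by (simp only: of_nat_less_iff) simp
  then have "c (Suc K) < c K - int q" by (simp add: c_def algebra_simps)
  then have disj: "{c K - int q..n} \<inter> {c (Suc K) - int q..c (Suc K)} = {}" by auto
  have "{x. \<forall>m\<in>{1..Suc K}. \<not> P (c m) x} = G \<inter> F"
    by (auto simp: G_def F_def atLeastAtMostSuc_conv)
  also have "prob (G \<inter> F) = prob G * prob F"
    by (rule independent[OF G_sets F_sets disj G_dep F_dep])
  also have "prob F = 1 - prob {x. P 0 x}"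
  proof -
    have "F = space L - path_shift (c (Suc K)) -` {x. P 0 x}"
      unfolding F_def space_L using shift by auto
    then show ?thesis
      using path_shift_sets[OF meas] prob_shift[OF meas] sets_L by (simp add: prob_compl)
  qed
  finally show ?case using Suc by (simp add: G_def)
qed

lemma event_occurs_along_progression:
  fixes P :: "int \<Rightarrow> (int \<Rightarrow> real) \<Rightarrow> bool" and q d :: nat
  assumes meas: "{x. P 0 x} \<in> sets path_space"
    and local: "\<And>m x x'. (\<forall>j\<in>{m - int q..m}. x j = x' j) \<Longrightarrow> P m x = P m x'"
    and shift: "\<And>m x. P m x = P 0 (path_shift m x)"
    and pos: "prob {x. P 0 x} > 0" and d: "d \<ge> 1"
  shows "AE x in L. \<exists>J\<ge>1. P (n - int J * int d) x"
proof (rule AE_I')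
  define N where "N = {x. \<forall>J\<in>{1..}. \<not> P (n - int J * int d) x}"
  have N_sets: "N \<in> sets L"
    unfolding N_def sets_L by (intro avoid_events_sets[where P=P, OF meas shift]) auto
  have "prob N \<le> (1 - prob {x. P 0 x}) ^ K" for K
  proof -
    have "N \<subseteq> {x. \<forall>m\<in>{1..K}. \<not> P (n - int ((q + 1) * m) * int d) x}"
    proof (intro subsetI CollectI ballI)
      fix x m assume "x \<in> N" "m \<in> {1..K}"
      moreover have "(q + 1) * m \<ge> 1" using \<open>m \<in> {1..K}\<close> by simp
      ultimately show "\<not> P (n - int ((q + 1) * m) * int d) x" unfolding N_def by blast
    qed
    then have "prob N \<le> prob {x. \<forall>m\<in>{1..K}. \<not> P (n - int ((q + 1) * m) * int d) x}"
      using avoid_events_sets[where P=P, OF meas shift, of "{1..K}" "\<lambda>m. n - int ((q + 1) * m) * int d"]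
        sets_L by (intro finite_measure_mono) auto
    then show ?thesis
      using avoid_spaced_events_prob[where P=P, OF meas local shift d] by simp
  qed
  moreover have "(\<lambda>K. (1 - prob {x. P 0 x}) ^ K) \<longlonglongrightarrow> 0"
    using pos prob_le_1 by (intro LIMSEQ_power_zero) auto
  ultimately have "prob N \<le> 0" by (intro LIMSEQ_le_const) auto
  then show "N \<in> null_sets L"
    using N_sets by (simp add: null_sets_def emeasure_eq_measure measure_nonneg antisym)
  show "{x \<in> space L. \<not> (\<exists>J\<ge>1. P (n - int J * int d) x)} \<subseteq> N"
    unfolding N_def by auto
qed

end

section \<open>The law of an i.i.d. sequence\<close>

text \<open>The path of a process, and the extension by zero used to view a function of
  finitely many coordinates as a path.\<close>

definition path_of :: "(int \<Rightarrow> 'a \<Rightarrow> real) \<Rightarrow> 'a \<Rightarrow> (int \<Rightarrow> real)" where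
  "path_of e \<omega> = (\<lambda>n. e n \<omega>)"

definition extend_zero :: "int set \<Rightarrow> (int \<Rightarrow> real) \<Rightarrow> (int \<Rightarrow> real)" where
  "extend_zero J z = (\<lambda>n. if n \<in> J then z n else 0)"

lemma extend_zero_measurable: "extend_zero J \<in> measurable (PiM J (\<lambda>_. borel)) path_space"
  unfolding extend_zero_def
proof (rule measurable_PiM_single')
  fix i :: int
  show "(\<lambda>z. if i \<in> J then z i else 0) \<in> borel_measurable (PiM J (\<lambda>_. borel))"
    by (cases "i \<in> J") auto
qed (auto simp: space_PiM)

lemma depends_on_restrict:
  assumes "depends_on J C"
  shows "path_of e \<omega> \<in> C \<longleftrightarrow> extend_zero J (restrict (\<lambda>i. e i \<omega>) J) \<in> C"
  using assms unfolding depends_on_def by (auto simp: extend_zero_def path_of_def)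

locale iid_process = prob_space M for M :: "'a measure" +
  fixes e :: "int \<Rightarrow> 'a \<Rightarrow> real"
  assumes iid: "iid_seq M e"
begin

lemma e_measurable[measurable]: "e n \<in> borel_measurable M"
  using iid by (simp add: iid_seq_def)

lemma path_of_measurable[measurable]: "path_of e \<in> measurable M path_space"
  unfolding path_of_def by (rule measurable_PiM_single') (auto simp: space_PiM)

abbreviation law :: "(int \<Rightarrow> real) measure" where
  "law \<equiv> distr M path_space (path_of e)"

lemma law_eq_product: "law = PiM UNIV (\<lambda>_. distr M borel (e 0))"
proof -
  have "distr M path_space (\<lambda>x. \<lambda>i\<in>UNIV. e i x) = PiM UNIV (\<lambda>i. distr M borel (e i))"
  proof -
    have "indep_vars (\<lambda>_. borel) e UNIV" using iid by (simp add: iid_seq_def)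
    then show ?thesis by (subst (asm) indep_vars_iff_distr_eq_PiM) auto
  qed
  moreover have "(\<lambda>i. distr M borel (e i)) = (\<lambda>_. distr M borel (e 0))"
    using iid unfolding iid_seq_def by blast
  moreover have "path_of e = (\<lambda>x. \<lambda>i\<in>UNIV. e i x)" by (intro ext) (simp add: path_of_def)
  ultimately show ?thesis by simp
qed

lemma law_shift_invariant: "distr law path_space (path_shift k) = law"
proof -
  let ?D = "distr M borel (e 0)"
  have "prob_space ?D" by (intro prob_space_distr) simp
  then have "distr (PiM UNIV (\<lambda>_. ?D)) (PiM UNIV (\<lambda>_. ?D)) (\<lambda>x. \<lambda>n\<in>UNIV. x (n + k)) = PiM UNIV (\<lambda>_. ?D)"
    using distr_PiM_reindex[of UNIV "\<lambda>_. ?D" "\<lambda>n. n + k" UNIV] by (simp add: inj_on_def)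
  moreover have "sets path_space = sets (PiM UNIV (\<lambda>_. ?D))" by (rule sets_PiM_cong) auto
  then have "distr (PiM UNIV (\<lambda>_. ?D)) path_space (path_shift k)
      = distr (PiM UNIV (\<lambda>_. ?D)) (PiM UNIV (\<lambda>_. ?D)) (\<lambda>x. \<lambda>n\<in>UNIV. x (n + k))"
    by (intro distr_cong) (auto simp: path_shift_def)
  ultimately show ?thesis unfolding law_eq_product by simp
qed

lemma law_independent:
  assumes C: "C \<in> sets path_space" and D: "D \<in> sets path_space" and disj: "J \<inter> K = {}"
    and dep: "depends_on J C" "depends_on K D"
  shows "measure law (C \<inter> D) = measure law C * measure law D"
proof -
  let ?XJ = "\<lambda>\<omega>. restrict (\<lambda>i. e i \<omega>) J" and ?XK = "\<lambda>\<omega>. restrict (\<lambda>i. e i \<omega>) K"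
  let ?C' = "extend_zero J -` C \<inter> space (PiM J (\<lambda>_. borel))"
    and ?D' = "extend_zero K -` D \<inter> space (PiM K (\<lambda>_. borel))"
  have indep: "indep_var (PiM J (\<lambda>_. borel)) ?XJ (PiM K (\<lambda>_. borel)) ?XK"
    using iid disj unfolding iid_seq_def by (intro indep_var_restrict) auto
  have C': "?C' \<in> sets (PiM J (\<lambda>_. borel))" using measurable_sets[OF extend_zero_measurable C] .
  have D': "?D' \<in> sets (PiM K (\<lambda>_. borel))" using measurable_sets[OF extend_zero_measurable D] .
  have pre_C: "?XJ -` ?C' \<inter> space M = path_of e -` C \<inter> space M"
    using depends_on_restrict[OF dep(1), of e] by (auto simp: space_PiM)
  have pre_D: "?XK -` ?D' \<inter> space M = path_of e -` D \<inter> space M"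
    using depends_on_restrict[OF dep(2), of e] by (auto simp: space_PiM)
  have "measure law (C \<inter> D) = prob (path_of e -` (C \<inter> D) \<inter> space M)"
    using C D by (intro measure_distr) auto
  also have "path_of e -` (C \<inter> D) \<inter> space M = (\<lambda>x. (?XJ x, ?XK x)) -` (?C' \<times> ?D') \<inter> space M"
    using depends_on_restrict[OF dep(1), of e] depends_on_restrict[OF dep(2), of e] by (auto simp: space_PiM)
  also have "prob \<dots> = prob (?XJ -` ?C' \<inter> space M) * prob (?XK -` ?D' \<inter> space M)"
    by (rule indep_varD[OF indep C' D'])
  also have "\<dots> = measure law C * measure law D"
    unfolding pre_C pre_D using C D by (simp add: measure_distr)
  finally show ?thesis .
qed

lemma shift_independent_law: "shift_independent law"
  unfolding shift_independent_def shift_independent_axioms_def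
  using prob_space_distr[OF path_of_measurable] law_shift_invariant law_independent by auto

interpretation law: shift_independent law
  by (rule shift_independent_law)

lemma event_occurs_along_progression_AE:
  fixes P :: "int \<Rightarrow> (int \<Rightarrow> real) \<Rightarrow> bool" and q d :: nat
  assumes meas: "{x. P 0 x} \<in> sets path_space"
    and local: "\<And>m x x'. (\<forall>j\<in>{m - int q..m}. x j = x' j) \<Longrightarrow> P m x = P m x'"
    and shift: "\<And>m x. P m x = P 0 (path_shift m x)"
    and pos: "prob {\<omega> \<in> space M. P 0 (path_of e \<omega>)} > 0" and d: "d \<ge> 1"
  shows "AE \<omega> in M. \<exists>J\<ge>1. P (n - int J * int d) (path_of e \<omega>)"
proof -
  have "measure law {x. P 0 x} = prob {\<omega> \<in> space M. P 0 (path_of e \<omega>)}"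
    using meas by (subst measure_distr) (auto simp: vimage_def Int_def conj_commute)
  then have "AE x in law. \<exists>J\<ge>1. P (n - int J * int d) x"
    using pos by (intro law.event_occurs_along_progression[where P=P, OF meas local shift _ d]) auto
  then show ?thesis by (rule AE_distrD[OF path_of_measurable])
qed

text \<open>A shift-equivariant measurable map of the i.i.d. path is strictly stationary and
  ergodic: all its shifts have the law \<open>Y\<^sub>*(law)\<close>, and its invariant events pull back to
  invariant events of the i.i.d. law.\<close>

lemma equivariant_factor_law:
  assumes Y: "Y \<in> measurable path_space path_space"
    and equivariant: "\<And>k x. Y (path_shift k x) = path_shift k (Y x)"
  shows "proc_law M (\<lambda>n \<omega>. Y (path_of e \<omega>) (n + k)) = distr law path_space Y"
proof -
  have "(\<lambda>\<omega> n. Y (path_of e \<omega>) (n + k)) = Y \<circ> path_shift k \<circ> path_of e"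
    unfolding fun_eq_iff comp_def equivariant by (simp add: path_shift_def)
  then have "proc_law M (\<lambda>n \<omega>. Y (path_of e \<omega>) (n + k)) = distr law path_space (Y \<circ> path_shift k)"
    unfolding proc_law_def using Y by (simp add: distr_distr comp_assoc)
  also have "\<dots> = distr (distr law path_space (path_shift k)) path_space Y"
    using Y by (subst distr_distr) (auto simp: measurable_cong_sets[OF law.sets_L])
  finally show ?thesis by (simp add: law_shift_invariant)
qed

lemma equivariant_factor_stationary_ergodic:
  assumes Y: "Y \<in> measurable path_space path_space"
    and equivariant: "\<And>k x. Y (path_shift k x) = path_shift k (Y x)"
  shows "strictly_stationary M (\<lambda>n \<omega>. Y (path_of e \<omega>) n)"
    and "ergodic_process M (\<lambda>n \<omega>. Y (path_of e \<omega>) n)"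
proof -
  note factor_law = equivariant_factor_law[OF Y equivariant]
  show "strictly_stationary M (\<lambda>n \<omega>. Y (path_of e \<omega>) n)"
    unfolding strictly_stationary_def using factor_law factor_law[of 0] by simp
  show "ergodic_process M (\<lambda>n \<omega>. Y (path_of e \<omega>) n)"
    unfolding ergodic_process_def
  proof (intro ballI impI)
    fix A assume A: "A \<in> sets path_space" and inv: "(\<lambda>x n. x (n + 1)) -` A = A"
    have YA: "Y -` A \<in> sets path_space"
      using measurable_sets[OF Y A] by (simp add: space_path_space)
    have "(\<lambda>x n. x (n + 1)) = path_shift 1" by (auto simp: fun_eq_iff path_shift_def)
    then have "path_shift 1 -` (Y -` A) = Y -` A"
      using inv by (auto simp: equivariant)
    moreover have "measure (proc_law M (\<lambda>n \<omega>. Y (path_of e \<omega>) n)) A = law.prob (Y -` A)"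
    proof -
      have "measure (distr law path_space Y) A = law.prob (Y -` A \<inter> space law)"
        using A Y by (intro measure_distr) (auto simp: measurable_cong_sets[OF law.sets_L])
      then show ?thesis using factor_law[of 0] by (simp add: space_path_space)
    qed
    ultimately show "measure (proc_law M (\<lambda>n \<omega>. Y (path_of e \<omega>) n)) A = 0 \<or>
        measure (proc_law M (\<lambda>n \<omega>. Y (path_of e \<omega>) n)) A = 1"
      using law.invariant_event_prob_0_1[OF YA] by simp
  qed
qed

end

section \<open>The TMA solution as a function of the noise path\<close>

abbreviation path_ma :: "real \<Rightarrow> (nat \<Rightarrow> real) \<Rightarrow> nat \<Rightarrow> int \<Rightarrow> (int \<Rightarrow> real) \<Rightarrow> real" where
  "path_ma mu c q \<equiv> ma_part mu c q (\<lambda>n x. x n)"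

lemma path_ma_measurable[measurable]: "path_ma mu c q n \<in> borel_measurable path_space"
  unfolding ma_part_def by measurable

lemma path_ma_path_of: "path_ma mu c q n (path_of e \<omega>) = ma_part mu c q e n \<omega>"
  by (simp add: ma_part_def path_of_def)

lemma path_ma_shift: "path_ma mu c q n (path_shift k x) = path_ma mu c q (n + k) x"
  by (simp add: ma_part_def path_shift_def algebra_simps)

lemma path_ma_local:
  assumes "\<forall>j\<in>{m - int q..m}. x j = x' j"
  shows "path_ma mu c q m x = path_ma mu c q m x'"
proof -
  have "(\<Sum>i=1..q. c i * x (m - int i)) = (\<Sum>i=1..q. c i * x' (m - int i))"
    using assms by (intro sum.cong) auto
  then show ?thesis using assms by (simp add: ma_part_def)
qed

lemma alpha_series_shift:
  assumes "\<And>n. a n (path_shift k x) = a (n + k) x" "\<And>n. b n (path_shift k x) = b (n + k) x"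
  shows "alpha_series a b r d n (path_shift k x) = alpha_series a b r d (n + k) x"
  unfolding alpha_series_def alpha_term_def assms by (simp add: algebra_simps)

definition tma_path_map ::
  "real \<Rightarrow> real \<Rightarrow> (nat \<Rightarrow> real) \<Rightarrow> (nat \<Rightarrow> real) \<Rightarrow> nat \<Rightarrow> real \<Rightarrow> nat \<Rightarrow> (int \<Rightarrow> real) \<Rightarrow> (int \<Rightarrow> real)" where
  "tma_path_map mu1 mu2 phi psi q r d x = (\<lambda>n.
     path_ma mu2 psi q n x + (path_ma mu1 phi q n x - path_ma mu2 psi q n x) *
       alpha_series (path_ma mu2 psi q) (path_ma mu1 phi q) r d n x)"

lemma tma_path_map_measurable:
  "tma_path_map mu1 mu2 phi psi q r d \<in> measurable path_space path_space"
proof -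
  have [measurable]: "alpha_series (path_ma mu2 psi q) (path_ma mu1 phi q) r d n \<in> borel_measurable path_space" for n
    by (intro alpha_series_measurable) auto
  show ?thesis unfolding tma_path_map_def
    by (rule measurable_PiM_single') (auto simp: space_PiM)
qed

lemma tma_path_map_shift:
  "tma_path_map mu1 mu2 phi psi q r d (path_shift k x) = path_shift k (tma_path_map mu1 mu2 phi psi q r d x)"
  by (auto simp: fun_eq_iff tma_path_map_def path_ma_shift alpha_series_shift)
    (simp add: path_shift_def)

text \<open>Under the nondegeneracy hypothesis the regimes agree at some time \<open>n - Jd\<close> a.s.:
  agreement at time m is a stationary event of the window \<open>m - q, ..., m\<close> with probability
  \<open>P(a\<^sub>0 \<le> r, b\<^sub>0 \<le> r) + P(a\<^sub>0 > r, b\<^sub>0 > r) > 0\<close>.\<close>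

lemma (in iid_process) regimes_agree_AE:
  fixes q d :: nat and r mu1 mu2 :: real and phi psi :: "nat \<Rightarrow> real"
  defines "a \<equiv> ma_part mu2 psi q e" and "b \<equiv> ma_part mu1 phi q e"
  assumes d: "d \<ge> 1"
    and pos: "measure M {\<omega>\<in>space M. a 0 \<omega> \<le> r \<and> b 0 \<omega> \<le> r}
            + measure M {\<omega>\<in>space M. a 0 \<omega> > r \<and> b 0 \<omega> > r} \<noteq> 0"
  shows "AE \<omega> in M. \<exists>J. agree_below a b r d n J \<omega>"
proof -
  define P where "P m x \<longleftrightarrow> (path_ma mu2 psi q m x \<le> r \<longleftrightarrow> path_ma mu1 phi q m x \<le> r)" for m x
  have "{x \<in> space path_space. P 0 x} \<in> sets path_space" unfolding P_def by measurable
  then have meas: "{x. P 0 x} \<in> sets path_space" by (simp add: space_path_space)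
  have local: "P m x = P m x'" if "\<forall>j\<in>{m - int q..m}. x j = x' j" for m x x'
    unfolding P_def using path_ma_local[OF that] by metis
  have shift: "P m x = P 0 (path_shift m x)" for m x
    unfolding P_def by (simp add: path_ma_shift)
  have "{\<omega> \<in> space M. P 0 (path_of e \<omega>)} =
      {\<omega>\<in>space M. a 0 \<omega> \<le> r \<and> b 0 \<omega> \<le> r} \<union> {\<omega>\<in>space M. a 0 \<omega> > r \<and> b 0 \<omega> > r}"
    by (auto simp: P_def a_def b_def path_ma_path_of)
  also have "prob \<dots> = measure M {\<omega>\<in>space M. a 0 \<omega> \<le> r \<and> b 0 \<omega> \<le> r}
      + measure M {\<omega>\<in>space M. a 0 \<omega> > r \<and> b 0 \<omega> > r}"
    unfolding a_def b_def ma_part_def by (intro finite_measure_Union) auto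
  finally have "prob {\<omega> \<in> space M. P 0 (path_of e \<omega>)} > 0"
    using pos by (simp add: order_less_le)
  from event_occurs_along_progression_AE[where P=P, OF meas local shift this d]
  show ?thesis
    by (rule AE_mp) (auto simp: agree_below_def P_def a_def b_def path_ma_path_of)
qed

lemma alpha_series_path_of:
  "alpha_series (path_ma mu2 psi q) (path_ma mu1 phi q) r d n (path_of e \<omega>) =
   alpha_series (ma_part mu2 psi q e) (ma_part mu1 phi q e) r d n \<omega>"
  by (simp add: alpha_series_def alpha_term_def path_ma_path_of)

theorem theorem2p1:
  fixes M :: "'a measure" and e :: "int \<Rightarrow> 'a \<Rightarrow> real"
    and q d :: nat and r mu1 mu2 :: real and phi psi :: "nat \<Rightarrow> real"
  defines "a \<equiv> ma_part mu2 psi q e"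
    and "b \<equiv> ma_part mu1 phi q e"
  defines "y \<equiv> (\<lambda>n \<omega>. a n \<omega> +
              ((mu1 - mu2) + (\<Sum>i=1..q. (phi i - psi i) * e (n - int i) \<omega>))
              * alpha_series a b r d n \<omega>)"
  assumes "prob_space M"
    and "iid_seq M e"
    and "q \<ge> 1" and "d \<ge> 1"
    and "\<forall>n. measure M {\<omega>\<in>space M. a n \<omega> \<le> r \<and> b n \<omega> \<le> r}
            + measure M {\<omega>\<in>space M. a n \<omega> > r \<and> b n \<omega> > r} \<noteq> 0"
  shows "(\<forall>n. (AE \<omega> in M. summable (\<lambda>j. alpha_term a b r d n (Suc j) \<omega>))
             \<and> integrable M (alpha_series a b r d n)
             \<and> ((\<lambda>N. LINT \<omega>|M. \<bar>(\<Sum>j<N. alpha_term a b r d n (Suc j) \<omega>)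
                                   - alpha_series a b r d n \<omega>\<bar>) \<longlonglongrightarrow> 0))
       \<and> (\<forall>n. y n \<in> borel_measurable M)
       \<and> tma_solution M e q d r mu1 mu2 phi psi y
       \<and> strictly_stationary M y
       \<and> ergodic_process M y
       \<and> (\<forall>y'. (\<forall>n. y' n \<in> borel_measurable M) \<and> tma_solution M e q d r mu1 mu2 phi psi y'
              \<longrightarrow> (\<forall>n. AE \<omega> in M. y' n \<omega> = y n \<omega>))"
proof -
  interpret iid_process M e
    using \<open>prob_space M\<close> \<open>iid_seq M e\<close> by (simp add: iid_process_def iid_process_axioms_def)
  let ?Y = "tma_path_map mu1 mu2 phi psi q r d"
  have y_alt: "y = (\<lambda>n \<omega>. a n \<omega> + (b n \<omega> - a n \<omega>) * alpha_series a b r d n \<omega>)"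
    unfolding y_def a_def b_def by (simp add: ma_part_diff)
  have y_path: "y = (\<lambda>n \<omega>. ?Y (path_of e \<omega>) n)"
    unfolding y_alt a_def b_def tma_path_map_def by (simp add: path_ma_path_of alpha_series_path_of)
  have meas: "a n \<in> borel_measurable M" "b n \<in> borel_measurable M" for n
    unfolding a_def b_def ma_part_def by measurable
  have agree: "AE \<omega> in M. \<exists>J. agree_below a b r d n J \<omega>" for n
    using assms(8) unfolding a_def b_def by (intro regimes_agree_AE[OF \<open>d \<ge> 1\<close>]) blast
  have "y n \<in> borel_measurable M" for n
    unfolding y_path using tma_path_map_measurable by measurable
  moreover have "tma_solution M e q d r mu1 mu2 phi psi y"
    unfolding y_alt a_def b_def by (rule tma_solution_of_agree[OF agree[unfolded a_def b_def]])
  moreover have "AE \<omega> in M. y' n \<omega> = y n \<omega>" if "tma_solution M e q d r mu1 mu2 phi psi y'" for y' n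
    unfolding y_alt a_def b_def by (rule tma_solution_unique[OF agree[unfolded a_def b_def] that])
  moreover have "strictly_stationary M y" "ergodic_process M y"
    unfolding y_path using tma_path_map_measurable tma_path_map_shift
    by (rule equivariant_factor_stationary_ergodic)+
  ultimately show ?thesis
    using alpha_series_convergence[OF meas agree] by blast
qed

end
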